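(* Define $\beta=(\beta_n)_{n\ge0}$ by $\beta_n=1$ for $0\le n\le 3!=6$, and for each integer $k\ge3$: $\beta_n=\frac1{k!}$ for $k!<n\le(k+1)!-2$ and for $n=(k+1)!$, and $\beta_n=\frac1{(k+1)!}$ for $n=(k+1)!-1$. Then for every $a\in(0,1)$, the map $T_a$ does not induce a bounded composition operator on $H^2(\beta)$.
   Context: $H^2(\beta)$ is the Hilbert space of analytic functions $f(z)=\sum_{n\ge0}a_nz^n$ on the unit disk $\mathbb D$ with $\|f\|^2=\sum_{n\ge0}|a_n|^2\beta_n<\infty$. $T_a(z)=\frac{a+z}{1+\bar a z}$ and $C_{T_a}f=f\circ T_a$. *)

theory Defs
  imports "HOL-Analysis.Analysis"
begin

definition taylor_coeff :: "(complex \<Rightarrow> complex) \<Rightarrow> nat \<Rightarrow> complex" where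
  "taylor_coeff f n = (deriv ^^ n) f 0 / of_nat (fact n)"

definition in_H2 :: "(nat \<Rightarrow> real) \<Rightarrow> (complex \<Rightarrow> complex) \<Rightarrow> bool" where
  "in_H2 \<beta> f \<longleftrightarrow> f holomorphic_on ball 0 1 \<and>
     summable (\<lambda>n. (cmod (taylor_coeff f n))\<^sup>2 * \<beta> n)"

definition H2_norm :: "(nat \<Rightarrow> real) \<Rightarrow> (complex \<Rightarrow> complex) \<Rightarrow> real" where
  "H2_norm \<beta> f = sqrt (\<Sum>n. (cmod (taylor_coeff f n))\<^sup>2 * \<beta> n)"

definition T :: "complex \<Rightarrow> complex \<Rightarrow> complex" where
  "T a z = (a + z) / (1 + cnj a * z)"

definition bounded_comp_op :: "(nat \<Rightarrow> real) \<Rightarrow> (complex \<Rightarrow> complex) \<Rightarrow> bool" where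
  "bounded_comp_op \<beta> \<phi> \<longleftrightarrow>
     (\<exists>C. \<forall>f. in_H2 \<beta> f \<longrightarrow> in_H2 \<beta> (f \<circ> \<phi>) \<and> H2_norm \<beta> (f \<circ> \<phi>) \<le> C * H2_norm \<beta> f)"

definition beta0 :: "nat \<Rightarrow> real" where
  "beta0 n = (if n \<le> 6 then 1 else
     (let k = (THE k. 3 \<le> k \<and> fact k < n \<and> n \<le> (fact (Suc k) :: nat)) in
      if n = fact (Suc k) - 1 then 1 / fact (Suc k) else 1 / fact k))"

end

(*
  Let c_n be the Taylor coefficients of T_a^m. Since T_a is inner, multiplication by T_a is
  an isometry of the Hardy space, so p_n = c_n^2 is a probability distribution. Writing
  theta = z d/dz, the identity (theta - m) T_a^m = m T_a^(m-1) (theta T_a - T_a) and the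
  orthogonality of theta T_a - T_a to T_a show that p has mean m and variance of order m^2,
  while its fourth central moment is O(m^4); hence a deficit of order m lies below the mean,
  and p carries a fixed mass below m. Comparing with the dilated series T_a(rz)^m, whose
  squared norm decays like (1 - kappa (1 - r))^m with kappa = (1 - a)/(1 + a), only little of
  this mass lies below epsilon m, so a fixed mass c sits in (epsilon m, m). For m = (k+1)! - 1
  the test function z^m has squared norm 1/(k+1)!, whereas its image has squared norm at least
  c/k!, and the ratio k + 1 is unbounded.
*)
theory Submission
  imports Defs "HOL-Complex_Analysis.Laurent_Convergence"
begin

section \<open>Square-summable real power series\<close>

definition fps_l2 :: "real fps \<Rightarrow> bool" where
  "fps_l2 f \<longleftrightarrow> summable (\<lambda>n. (fps_nth f n)\<^sup>2)"

definition fps_sqnorm :: "real fps \<Rightarrow> real" where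
  "fps_sqnorm f = (\<Sum>n. (fps_nth f n)\<^sup>2)"

definition fps_inner :: "real fps \<Rightarrow> real fps \<Rightarrow> real" where
  "fps_inner f g = (\<Sum>n. fps_nth f n * fps_nth g n)"

lemma fps_l2_inner_summable:
  assumes "fps_l2 f" "fps_l2 g"
  shows "summable (\<lambda>n. fps_nth f n * fps_nth g n)"
proof (rule summable_comparison_test')
  show "summable (\<lambda>n. ((fps_nth f n)\<^sup>2 + (fps_nth g n)\<^sup>2) / 2)"
    using assms unfolding fps_l2_def by (intro summable_divide summable_add)
  show "norm (fps_nth f n * fps_nth g n) \<le> ((fps_nth f n)\<^sup>2 + (fps_nth g n)\<^sup>2) / 2" for n
    using sum_squares_bound[of "\<bar>fps_nth f n\<bar>" "\<bar>fps_nth g n\<bar>"] by (simp add: abs_mult)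
qed

lemma fps_sqnorm_nonneg: "fps_l2 f \<Longrightarrow> 0 \<le> fps_sqnorm f"
  unfolding fps_sqnorm_def fps_l2_def by (intro suminf_nonneg) auto

lemma fps_sum_sq_le_sqnorm:
  "fps_l2 f \<Longrightarrow> finite A \<Longrightarrow> (\<Sum>n\<in>A. (fps_nth f n)\<^sup>2) \<le> fps_sqnorm f"
  unfolding fps_sqnorm_def fps_l2_def by (intro sum_le_suminf) auto

lemma fps_l2_one: "fps_l2 1"
  unfolding fps_l2_def by (rule summable_finite[of "{0}"]) auto

lemma fps_sqnorm_one: "fps_sqnorm 1 = 1"
  unfolding fps_sqnorm_def by (subst suminf_finite[of "{0}"]) auto

lemma fps_l2_add: "fps_l2 f \<Longrightarrow> fps_l2 g \<Longrightarrow> fps_l2 (f + g)"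
  using fps_l2_inner_summable[of f g]
  unfolding fps_l2_def by (auto simp: power2_sum mult.assoc intro!: summable_add summable_mult)

lemma fps_l2_const_mult: "fps_l2 f \<Longrightarrow> fps_l2 (fps_const c * f)"
  unfolding fps_l2_def by (simp add: power_mult_distrib summable_mult)

lemma fps_l2_X_mult: "fps_l2 f \<Longrightarrow> fps_l2 (fps_X * f)"
  unfolding fps_l2_def by (subst summable_Suc_iff[symmetric]) simp

lemma fps_sqnorm_X_mult: "fps_l2 f \<Longrightarrow> fps_sqnorm (fps_X * f) = fps_sqnorm f"
  using suminf_split_head[of "\<lambda>n. (fps_nth (fps_X * f) n)\<^sup>2"] fps_l2_X_mult[of f]
  unfolding fps_sqnorm_def fps_l2_def by simp

lemma fps_inner_commute: "fps_inner f g = fps_inner g f"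
  unfolding fps_inner_def by (simp add: mult.commute)

lemma fps_sqnorm_const_mult: "fps_l2 f \<Longrightarrow> fps_sqnorm (fps_const c * f) = c\<^sup>2 * fps_sqnorm f"
  unfolding fps_sqnorm_def fps_l2_def by (simp add: power_mult_distrib suminf_mult)

lemma fps_inner_const_mult_left:
  "fps_l2 f \<Longrightarrow> fps_l2 g \<Longrightarrow> fps_inner (fps_const c * f) g = c * fps_inner f g"
  unfolding fps_inner_def by (drule (1) fps_l2_inner_summable) (simp add: suminf_mult mult.assoc)

lemma fps_sqnorm_add:
  assumes "fps_l2 f" "fps_l2 g"
  shows "fps_sqnorm (f + g) = fps_sqnorm f + 2 * fps_inner f g + fps_sqnorm g"
proof -
  have "(\<lambda>n. (fps_nth (f + g) n)\<^sup>2) sums (fps_sqnorm f + fps_sqnorm g + 2 * fps_inner f g)"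
    using assms fps_l2_inner_summable[OF assms]
    unfolding fps_sqnorm_def fps_inner_def fps_l2_def power2_sum fps_add_nth mult.assoc
    by (intro sums_add sums_mult summable_sums)
  then show ?thesis
    unfolding fps_sqnorm_def by (simp add: sums_iff)
qed

lemma fps_inner_le:
  assumes "fps_l2 f" "fps_l2 g"
  shows "2 * fps_inner f g \<le> fps_sqnorm f + fps_sqnorm g"
proof -
  have "(\<Sum>n. 2 * (fps_nth f n * fps_nth g n)) \<le> (\<Sum>n. (fps_nth f n)\<^sup>2 + (fps_nth g n)\<^sup>2)"
    using assms fps_l2_inner_summable[OF assms] sum_squares_bound
    unfolding fps_l2_def by (intro suminf_le summable_add summable_mult) (auto simp: mult.assoc)
  then show ?thesis
    using assms fps_l2_inner_summable[OF assms]
    unfolding fps_sqnorm_def fps_inner_def fps_l2_def by (simp add: suminf_add suminf_mult)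
qed

lemma fps_sqnorm_add_le:
  "fps_l2 f \<Longrightarrow> fps_l2 g \<Longrightarrow> fps_sqnorm (f + g) \<le> 2 * fps_sqnorm f + 2 * fps_sqnorm g"
  using fps_sqnorm_add fps_inner_le by fastforce

section \<open>Multipliers and the Euler operator\<close>

lemma fps_l2_inverse_linear_mult:
  assumes y: "fps_l2 y" and g: "\<bar>g\<bar> < 1"
  shows "fps_l2 (inverse (1 + fps_const g * fps_X) * y)"
proof -
  define x where "x = inverse (1 + fps_const g * fps_X) * y"
  have "y = (1 + fps_const g * fps_X) * x"
    unfolding x_def by (simp add: mult.assoc[symmetric] inverse_mult_eq_1')
  then have x_rec: "fps_nth x n = fps_nth y n + - g * fps_nth (fps_X * x) n" for n
    by (simp add: distrib_right mult.assoc del: fps_X_mult_nth)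
  have shift_le: "L2_set (fps_nth (fps_X * x)) {..<K} \<le> L2_set (fps_nth x) {..<K}" for K
  proof -
    have "(\<Sum>n<K. (fps_nth (fps_X * x) n)\<^sup>2) \<le> (\<Sum>n<Suc K. (fps_nth (fps_X * x) n)\<^sup>2)"
      by simp
    also have "\<dots> = (\<Sum>n<K. (fps_nth x n)\<^sup>2)"
      by (subst sum.lessThan_Suc_shift) simp
    finally show ?thesis
      unfolding L2_set_def by (simp del: fps_X_mult_nth)
  qed
  have partial: "L2_set (fps_nth x) {..<K} \<le> sqrt (fps_sqnorm y) / (1 - \<bar>g\<bar>)" for K
  proof -
    have "L2_set (fps_nth x) {..<K}
        \<le> L2_set (fps_nth y) {..<K} + L2_set (\<lambda>n. - g * fps_nth (fps_X * x) n) {..<K}"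
      unfolding x_rec by (rule L2_set_triangle_ineq)
    also have "\<dots> = L2_set (fps_nth y) {..<K} + \<bar>g\<bar> * L2_set (fps_nth (fps_X * x)) {..<K}"
      by (simp add: L2_set_def power_mult_distrib real_sqrt_mult sum_distrib_left[symmetric]
          del: fps_X_mult_nth)
    also have "\<dots> \<le> sqrt (fps_sqnorm y) + \<bar>g\<bar> * L2_set (fps_nth x) {..<K}"
      using fps_sum_sq_le_sqnorm[OF y] mult_left_mono[OF shift_le]
      by (intro add_mono) (auto simp: L2_set_def)
    finally show ?thesis
      using g by (simp add: field_simps)
  qed
  have "(\<Sum>n<K. (fps_nth x n)\<^sup>2) \<le> (sqrt (fps_sqnorm y) / (1 - \<bar>g\<bar>))\<^sup>2" for K
    using power_mono[OF partial[of K] L2_set_nonneg, of 2] by (simp add: L2_set_def sum_nonneg)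
  then show ?thesis
    unfolding x_def[symmetric] fps_l2_def by (intro summableI_nonneg_bounded) auto
qed

inductive_set fps_X_inv_alg :: "real \<Rightarrow> real fps set" for g :: real where
  X: "fps_X \<in> fps_X_inv_alg g"
| const: "fps_const c \<in> fps_X_inv_alg g"
| inverse: "inverse (1 + fps_const g * fps_X) \<in> fps_X_inv_alg g"
| add: "f \<in> fps_X_inv_alg g \<Longrightarrow> h \<in> fps_X_inv_alg g \<Longrightarrow> f + h \<in> fps_X_inv_alg g"
| mult: "f \<in> fps_X_inv_alg g \<Longrightarrow> h \<in> fps_X_inv_alg g \<Longrightarrow> f * h \<in> fps_X_inv_alg g"

lemma fps_X_inv_alg_diff:
  assumes "f \<in> fps_X_inv_alg g" "h \<in> fps_X_inv_alg g"
  shows "f - h \<in> fps_X_inv_alg g"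
proof -
  have "f + fps_const (-1) * h \<in> fps_X_inv_alg g"
    using assms by (intro fps_X_inv_alg.intros)
  then show ?thesis
    by (simp flip: fps_const_neg)
qed

lemma fps_X_inv_alg_power: "f \<in> fps_X_inv_alg g \<Longrightarrow> f ^ j \<in> fps_X_inv_alg g"
  by (induction j) (auto intro: fps_X_inv_alg.intros fps_X_inv_alg.const[of 1, simplified])

lemma fps_deriv_in_fps_X_inv_alg: "f \<in> fps_X_inv_alg g \<Longrightarrow> fps_deriv f \<in> fps_X_inv_alg g"
proof (induction rule: fps_X_inv_alg.induct)
  case X
  show ?case using fps_X_inv_alg.const[of 1 g] by simp
next
  case (const c)
  show ?case using fps_X_inv_alg.const[of 0 g] by simp
next
  case inverse
  have "fps_deriv (inverse (1 + fps_const g * fps_X))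
      = fps_const (- g) * (inverse (1 + fps_const g * fps_X) * inverse (1 + fps_const g * fps_X))"
    by (subst fps_inverse_deriv) (simp_all add: power2_eq_square)
  then show ?case
    by (simp only:) (intro fps_X_inv_alg.intros)
qed (auto simp: fps_deriv_mult intro: fps_X_inv_alg.intros)

lemma fps_l2_mult_fps_X_inv_alg:
  assumes "f \<in> fps_X_inv_alg g" "\<bar>g\<bar> < 1" "fps_l2 y"
  shows "fps_l2 (f * y)"
  using assms
proof (induction arbitrary: y rule: fps_X_inv_alg.induct)
  case (add f h)
  then show ?case by (simp add: distrib_right fps_l2_add)
next
  case (mult f h)
  then show ?case by (simp add: mult.assoc)
qed (auto intro: fps_l2_X_mult fps_l2_const_mult fps_l2_inverse_linear_mult)

lemma fps_l2_fps_X_inv_alg: "f \<in> fps_X_inv_alg g \<Longrightarrow> \<bar>g\<bar> < 1 \<Longrightarrow> fps_l2 f"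
  using fps_l2_mult_fps_X_inv_alg[OF _ _ fps_l2_one] by simp

definition fps_euler_shift :: "nat \<Rightarrow> 'a::comm_ring_1 fps \<Rightarrow> 'a fps" where
  "fps_euler_shift k f = fps_X * fps_deriv f - fps_const (of_nat k) * f"

lemma fps_euler_shift_nth:
  "fps_nth (fps_euler_shift k f) n = (of_nat n - of_nat k) * fps_nth f n"
  unfolding fps_euler_shift_def
  by (cases n) (simp_all add: fps_deriv_nth algebra_simps del: of_nat_Suc)

lemma fps_euler_shift_mult:
  "fps_euler_shift (j + k) (f * g) = fps_euler_shift j f * g + f * fps_euler_shift k g"
  unfolding fps_euler_shift_def by (simp add: fps_deriv_mult algebra_simps flip: fps_const_add)

lemma fps_euler_shift_const_mult:
  "fps_euler_shift k (fps_const c * f) = fps_const c * fps_euler_shift k f"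
  unfolding fps_euler_shift_def by (simp add: algebra_simps)

lemma fps_euler_shift_power:
  "fps_euler_shift (Suc j) (f ^ Suc j) = fps_const (of_nat (Suc j)) * (f ^ j * fps_euler_shift 1 f)"
proof (induction j)
  case 0
  then show ?case by simp
next
  case (Suc j)
  have "fps_euler_shift (Suc (Suc j)) (f ^ Suc (Suc j))
      = fps_euler_shift (Suc j + 1) (f ^ Suc j * f)"
    by (simp add: mult.commute)
  also have "\<dots> = fps_const (of_nat (Suc (Suc j))) * (f ^ Suc j * fps_euler_shift 1 f)"
    unfolding fps_euler_shift_mult Suc fps_of_nat by (simp add: algebra_simps)
  finally show ?case .
qed

lemma fps_euler_shift_twice_power:
  fixes f :: "'a::comm_ring_1 fps"
  defines "u \<equiv> fps_euler_shift 1 f"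
  shows "fps_euler_shift (Suc (Suc i)) (fps_euler_shift (Suc (Suc i)) (f ^ Suc (Suc i)))
    = fps_const (of_nat (Suc (Suc i)))
        * (fps_const (of_nat (Suc i)) * (f ^ i * (u * u)) + f ^ Suc i * fps_euler_shift 1 u)"
proof -
  have "fps_euler_shift (Suc i + 1) (f ^ Suc i * u)
      = fps_euler_shift (Suc i) (f ^ Suc i) * u + f ^ Suc i * fps_euler_shift 1 u"
    by (rule fps_euler_shift_mult)
  then show ?thesis
    unfolding fps_euler_shift_power fps_euler_shift_const_mult u_def[symmetric]
    by (simp add: mult.assoc)
qed

lemma fps_euler_shift_in_fps_X_inv_alg:
  "f \<in> fps_X_inv_alg g \<Longrightarrow> fps_euler_shift k f \<in> fps_X_inv_alg g"
  unfolding fps_euler_shift_def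
  by (intro fps_X_inv_alg_diff fps_X_inv_alg.intros fps_deriv_in_fps_X_inv_alg)

lemma fps_inner_euler_shift_sums:
  assumes "fps_l2 (fps_euler_shift k f)" "fps_l2 f"
  shows "(\<lambda>n. (real n - real k) * (fps_nth f n)\<^sup>2) sums fps_inner (fps_euler_shift k f) f"
  using summable_sums[OF fps_l2_inner_summable[OF assms]]
  unfolding fps_inner_def by (simp add: fps_euler_shift_nth power2_eq_square mult.assoc)

lemma fps_sqnorm_euler_shift_sums:
  assumes "fps_l2 (fps_euler_shift k f)"
  shows "(\<lambda>n. (real n - real k)\<^sup>2 * (fps_nth f n)\<^sup>2) sums fps_sqnorm (fps_euler_shift k f)"
  using assms unfolding fps_l2_def fps_sqnorm_def
  by (simp add: summable_sums fps_euler_shift_nth power_mult_distrib)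

lemma fps_sqnorm_euler_shift_twice_sums:
  assumes "fps_l2 (fps_euler_shift k (fps_euler_shift k f))"
  shows "(\<lambda>n. (real n - real k) ^ 4 * (fps_nth f n)\<^sup>2)
      sums fps_sqnorm (fps_euler_shift k (fps_euler_shift k f))"
  using assms unfolding fps_l2_def fps_sqnorm_def
  by (simp add: summable_sums fps_euler_shift_nth power_mult_distrib flip: power_mult)

section \<open>Moebius transformations\<close>

text \<open>\<open>moebius_fps \<alpha> \<beta>\<close> is the Taylor series of \<open>z \<mapsto> T\<^sub>\<alpha>(\<beta>z)\<close>.\<close>

definition moebius_fps :: "real \<Rightarrow> real \<Rightarrow> real fps" where
  "moebius_fps \<alpha> \<beta> = (fps_const \<alpha> + fps_const \<beta> * fps_X) * inverse (1 + fps_const (\<alpha> * \<beta>) * fps_X)"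

lemma moebius_fps_in_fps_X_inv_alg: "moebius_fps \<alpha> \<beta> \<in> fps_X_inv_alg (\<alpha> * \<beta>)"
  unfolding moebius_fps_def by (intro fps_X_inv_alg.intros)

lemma fps_l2_moebius_power_mult:
  "\<bar>\<alpha> * \<beta>\<bar> < 1 \<Longrightarrow> fps_l2 y \<Longrightarrow> fps_l2 (moebius_fps \<alpha> \<beta> ^ j * y)"
  by (rule fps_l2_mult_fps_X_inv_alg[OF fps_X_inv_alg_power[OF moebius_fps_in_fps_X_inv_alg]])

lemma moebius_fps_compose_dilation:
  "moebius_fps a 1 oo (fps_const r * fps_X) = moebius_fps a r"
  unfolding moebius_fps_def
  by (simp add: fps_compose_mult_distrib fps_compose_add_distrib fps_inverse_compose
      mult.assoc[symmetric])

lemma fps_sqnorm_linear_mult: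
  assumes x: "fps_l2 x"
  shows "fps_sqnorm ((fps_const p + fps_const q * fps_X) * x)
       = (p\<^sup>2 + q\<^sup>2) * fps_sqnorm x + 2 * p * q * fps_inner x (fps_X * x)"
proof -
  have Xx: "fps_l2 (fps_X * x)"
    using x by (rule fps_l2_X_mult)
  have "fps_sqnorm ((fps_const p + fps_const q * fps_X) * x)
      = fps_sqnorm (fps_const p * x + fps_const q * (fps_X * x))"
    by (simp add: distrib_right mult.assoc)
  also have "\<dots> = fps_sqnorm (fps_const p * x)
      + 2 * fps_inner (fps_const p * x) (fps_const q * (fps_X * x))
      + fps_sqnorm (fps_const q * (fps_X * x))"
    using x Xx by (intro fps_sqnorm_add fps_l2_const_mult)
  also have "\<dots> = p\<^sup>2 * fps_sqnorm x + 2 * (p * q * fps_inner x (fps_X * x)) + q\<^sup>2 * fps_sqnorm x"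
    using x Xx
    by (simp add: fps_inner_const_mult_left fps_l2_const_mult fps_inner_commute[of x]
        fps_sqnorm_const_mult fps_sqnorm_X_mult)
  finally show ?thesis
    by (simp add: algebra_simps)
qed

text \<open>Both \<open>1 + \<alpha>\<beta>X\<close> and \<open>\<alpha> + \<beta>X\<close> have the same product of coefficients,
  so the cross terms of their squared norms cancel.\<close>

lemma fps_sqnorm_moebius_mult:
  assumes y: "fps_l2 y" and "\<bar>\<alpha> * \<beta>\<bar> < 1"
  defines "x \<equiv> inverse (1 + fps_const (\<alpha> * \<beta>) * fps_X) * y"
  shows "fps_sqnorm (moebius_fps \<alpha> \<beta> * y) = fps_sqnorm y - (1 - \<alpha>\<^sup>2) * (1 - \<beta>\<^sup>2) * fps_sqnorm x"
proof -
  have x: "fps_l2 x"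
    unfolding x_def using assms by (intro fps_l2_inverse_linear_mult)
  have "y = (fps_const 1 + fps_const (\<alpha> * \<beta>) * fps_X) * x"
    unfolding x_def by (simp add: mult.assoc[symmetric] inverse_mult_eq_1')
  then have "fps_sqnorm y = (1 + (\<alpha> * \<beta>)\<^sup>2) * fps_sqnorm x + 2 * (\<alpha> * \<beta>) * fps_inner x (fps_X * x)"
    using fps_sqnorm_linear_mult[OF x, of 1 "\<alpha> * \<beta>"] by simp
  moreover have "moebius_fps \<alpha> \<beta> * y = (fps_const \<alpha> + fps_const \<beta> * fps_X) * x"
    unfolding moebius_fps_def x_def by (simp add: mult.assoc)
  ultimately show ?thesis
    using fps_sqnorm_linear_mult[OF x, of \<alpha> \<beta>] by (simp add: algebra_simps power_mult_distrib)
qed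

lemma fps_sqnorm_le_inverse_linear_mult:
  assumes y: "fps_l2 y" and g: "0 \<le> g" "g < 1"
  shows "fps_sqnorm y \<le> (1 + g)\<^sup>2 * fps_sqnorm (inverse (1 + fps_const g * fps_X) * y)"
proof -
  define x where "x = inverse (1 + fps_const g * fps_X) * y"
  have x: "fps_l2 x"
    unfolding x_def using assms by (intro fps_l2_inverse_linear_mult) auto
  have "y = (fps_const 1 + fps_const g * fps_X) * x"
    unfolding x_def by (simp add: mult.assoc[symmetric] inverse_mult_eq_1')
  then have "fps_sqnorm y = (1 + g\<^sup>2) * fps_sqnorm x + 2 * g * fps_inner x (fps_X * x)"
    using fps_sqnorm_linear_mult[OF x, of 1 g] by simp
  also have "\<dots> \<le> (1 + g\<^sup>2) * fps_sqnorm x + g * (fps_sqnorm x + fps_sqnorm (fps_X * x))"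
    using mult_left_mono[OF fps_inner_le[OF x fps_l2_X_mult[OF x]] g(1)]
    by (simp add: mult.assoc mult.left_commute)
  finally show ?thesis
    unfolding x_def[symmetric] fps_sqnorm_X_mult[OF x] by (simp add: power2_sum algebra_simps)
qed

lemma moebius_contraction_factor_le:
  fixes a r :: real
  assumes a: "0 \<le> a" "a < 1" and r: "0 \<le> r" "r \<le> 1"
  shows "(1 - a) / (1 + a) * (1 - r) \<le> (1 - a\<^sup>2) * (1 - r\<^sup>2) / (1 + a * r)\<^sup>2"
proof -
  have "1 - a\<^sup>2 = (1 - a) * (1 + a)" "(1 + a)\<^sup>2 = (1 + a) * (1 + a)"
    by (simp_all add: algebra_simps power2_eq_square)
  then have "(1 - a) / (1 + a) * (1 - r) = (1 - a\<^sup>2) * (1 - r) / (1 + a)\<^sup>2"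
    using a by simp
  also have "\<dots> \<le> (1 - a\<^sup>2) * (1 - r\<^sup>2) / (1 + a)\<^sup>2"
    using a r
    by (intro divide_right_mono mult_left_mono)
      (auto simp: power2_eq_square mult_left_le mult_le_one)
  also have "\<dots> \<le> (1 - a\<^sup>2) * (1 - r\<^sup>2) / (1 + a * r)\<^sup>2"
  proof (rule divide_left_mono)
    show "0 \<le> (1 - a\<^sup>2) * (1 - r\<^sup>2)"
      using a r by (intro mult_nonneg_nonneg) (auto simp: power2_eq_square mult_le_one)
    show "(1 + a * r)\<^sup>2 \<le> (1 + a)\<^sup>2"
      using a r by (intro power_mono) (auto simp: mult_left_le)
    show "0 < (1 + a)\<^sup>2 * (1 + a * r)\<^sup>2"
      using a add_pos_nonneg[OF zero_less_one mult_nonneg_nonneg[OF a(1) r(1)]] by simp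
  qed
  finally show ?thesis .
qed

lemma fps_sqnorm_moebius_mult_le:
  assumes y: "fps_l2 y" and a: "0 \<le> a" "a < 1" and r: "0 \<le> r" "r \<le> 1"
  shows "fps_sqnorm (moebius_fps a r * y) \<le> (1 - (1 - a) / (1 + a) * (1 - r)) * fps_sqnorm y"
proof -
  define x where "x = inverse (1 + fps_const (a * r) * fps_X) * y"
  have ar: "0 \<le> a * r" "a * r < 1"
    using a r by (auto intro: le_less_trans[OF mult_left_le])
  have D: "0 \<le> (1 - a\<^sup>2) * (1 - r\<^sup>2)"
    using a r by (intro mult_nonneg_nonneg) (auto simp: power2_eq_square mult_le_one)
  have "(1 - a) / (1 + a) * (1 - r) * fps_sqnorm y
      \<le> (1 - a\<^sup>2) * (1 - r\<^sup>2) / (1 + a * r)\<^sup>2 * fps_sqnorm y"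
    using moebius_contraction_factor_le[OF a r] fps_sqnorm_nonneg[OF y] by (rule mult_right_mono)
  also have "\<dots> \<le> (1 - a\<^sup>2) * (1 - r\<^sup>2) * fps_sqnorm x"
  proof -
    have "fps_sqnorm y / (1 + a * r)\<^sup>2 \<le> fps_sqnorm x"
      using fps_sqnorm_le_inverse_linear_mult[OF y ar] ar unfolding x_def[symmetric]
      by (simp add: divide_le_eq mult.commute)
    then have "(1 - a\<^sup>2) * (1 - r\<^sup>2) * (fps_sqnorm y / (1 + a * r)\<^sup>2)
        \<le> (1 - a\<^sup>2) * (1 - r\<^sup>2) * fps_sqnorm x"
      using D by (rule mult_left_mono)
    then show ?thesis
      by simp
  qed
  finally show ?thesis
    using fps_sqnorm_moebius_mult[OF y, of a r] ar unfolding x_def[symmetric]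
    by (simp add: algebra_simps)
qed

lemma fps_sqnorm_moebius_power_mult_le:
  assumes y: "fps_l2 y" and a: "0 \<le> a" "a < 1" and r: "0 \<le> r" "r \<le> 1"
  shows "fps_sqnorm (moebius_fps a r ^ j * y)
    \<le> (1 - (1 - a) / (1 + a) * (1 - r)) ^ j * fps_sqnorm y"
proof (induction j)
  case 0
  then show ?case by simp
next
  case (Suc j)
  have ar: "\<bar>a * r\<bar> < 1"
    using a r by (auto intro: le_less_trans[OF mult_left_le])
  have "(1 - a) / (1 + a) * (1 - r) \<le> 1"
    using a r by (intro mult_le_one) auto
  then have "0 \<le> 1 - (1 - a) / (1 + a) * (1 - r)"
    by simp
  from order_trans[OF fps_sqnorm_moebius_mult_le[OF fps_l2_moebius_power_mult[OF ar y] a r]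
      mult_left_mono[OF Suc this]]
  show ?case
    by (simp add: mult.assoc)
qed

lemma fps_sqnorm_aut_power_mult:
  assumes "\<bar>a\<bar> < 1" "fps_l2 y"
  shows "fps_sqnorm (moebius_fps a 1 ^ j * y) = fps_sqnorm y"
proof (induction j)
  case (Suc j)
  have "fps_l2 (moebius_fps a 1 ^ j * y)"
    using assms by (intro fps_l2_moebius_power_mult) auto
  from fps_sqnorm_moebius_mult[OF this, of a 1] show ?case
    using assms Suc by (simp add: mult.assoc)
qed simp

lemma fps_inner_aut_power_mult:
  assumes a: "\<bar>a\<bar> < 1" and x: "fps_l2 x" and y: "fps_l2 y"
  shows "fps_inner (moebius_fps a 1 ^ j * x) (moebius_fps a 1 ^ j * y) = fps_inner x y"
proof -
  have Tx: "fps_l2 (moebius_fps a 1 ^ j * x)" and Ty: "fps_l2 (moebius_fps a 1 ^ j * y)"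
    using a x y by (auto intro: fps_l2_moebius_power_mult)
  have "fps_sqnorm (moebius_fps a 1 ^ j * x + moebius_fps a 1 ^ j * y) = fps_sqnorm (x + y)"
    using fps_sqnorm_aut_power_mult[OF a fps_l2_add[OF x y]] by (simp add: distrib_left)
  then show ?thesis
    using fps_sqnorm_add[OF x y] fps_sqnorm_add[OF Tx Ty] fps_sqnorm_aut_power_mult[OF a] x y
    by simp
qed

section \<open>A moment inequality\<close>

lemma sq_le_deviation_split:
  fixes x c H :: real
  assumes c: "- c \<le> x" and H: "0 < H"
  shows "x\<^sup>2 \<le> c * max 0 (- x) + H * max 0 x + x ^ 4 / H\<^sup>2"
proof (cases "0 \<le> x")
  case True
  have "x\<^sup>2 \<le> H * x + x ^ 4 / H\<^sup>2"
  proof (cases "x \<le> H")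
    case True
    then have "x\<^sup>2 \<le> H * x"
      using \<open>0 \<le> x\<close> by (simp add: power2_eq_square mult_right_mono)
    then show ?thesis
      by (simp add: add_increasing2)
  next
    case False
    then have "H\<^sup>2 * x\<^sup>2 \<le> x\<^sup>2 * x\<^sup>2"
      using H by (intro mult_right_mono power_mono) auto
    then have "x\<^sup>2 \<le> x ^ 4 / H\<^sup>2"
      using H by (simp add: field_simps power4_eq_xxxx power2_eq_square)
    then show ?thesis
      using H \<open>0 \<le> x\<close> by (simp add: add_increasing)
  qed
  then show ?thesis
    using True by simp
next
  case False
  then have "x\<^sup>2 \<le> c * (- x)"
    using c mult_right_mono[of "- x" c "- x"] by (simp add: power2_eq_square)
  moreover have "0 \<le> x ^ 4 / H\<^sup>2"
    using zero_le_even_power[of 4 x] by simp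
  moreover have "c * max 0 (- x) + H * max 0 x = c * (- x)"
    using False by simp
  ultimately show ?thesis
    by linarith
qed

lemma central_second_moment_le:
  fixes p :: "nat \<Rightarrow> real" and m :: nat and H :: real
  assumes p: "\<And>n. 0 \<le> p n" and H: "0 < H"
    and mean: "(\<lambda>n. (real n - real m) * p n) sums 0"
    and var: "summable (\<lambda>n. (real n - real m)\<^sup>2 * p n)"
    and quart: "summable (\<lambda>n. (real n - real m) ^ 4 * p n)"
  shows "(\<Sum>n. (real n - real m)\<^sup>2 * p n)
    \<le> (real m + H) * (\<Sum>n<m. (real m - real n) * p n) + (\<Sum>n. (real n - real m) ^ 4 * p n) / H\<^sup>2"
proof -
  define D where "D = (\<Sum>n<m. (real m - real n) * p n)"
  define below where "below n = max 0 (real m - real n) * p n" for n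
  define above where "above n = max 0 (real n - real m) * p n" for n
  have below: "below sums D"
    using sums_finite[of "{..<m}" below] unfolding D_def below_def by simp
  have "above = (\<lambda>n. (real n - real m) * p n + below n)"
    unfolding above_def below_def by (auto simp: max_def algebra_simps)
  then have above: "above sums D"
    using sums_add[OF mean below] by simp
  have pointwise: "(real n - real m)\<^sup>2 * p n
      \<le> real m * below n + H * above n + (real n - real m) ^ 4 * p n / H\<^sup>2" for n
    using mult_right_mono[OF sq_le_deviation_split[of "real m" "real n - real m" H] p[of n]] H
    unfolding below_def above_def by (simp add: algebra_simps)
  have "(\<Sum>n. (real n - real m)\<^sup>2 * p n)
      \<le> (\<Sum>n. real m * below n + H * above n + (real n - real m) ^ 4 * p n / H\<^sup>2)"
    using var pointwise below above quart
    by (intro suminf_le summable_add summable_mult summable_divide) (auto simp: sums_iff)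
  also have "\<dots> = real m * D + H * D + (\<Sum>n. (real n - real m) ^ 4 * p n) / H\<^sup>2"
    using below above quart by (intro sums_unique[symmetric] sums_add sums_mult sums_divide
        summable_sums)
  finally show ?thesis
    unfolding D_def by (simp add: algebra_simps)
qed

text \<open>The choice \<open>H = (2B/A + 1) m\<close> makes the quartic term at most half the variance.\<close>

lemma deficit_below_mean_ge:
  fixes p :: "nat \<Rightarrow> real" and m :: nat and A B :: real
  assumes p: "\<And>n. 0 \<le> p n" and m: "0 < m" and A: "0 < A" and B: "0 \<le> B"
    and mean: "(\<lambda>n. (real n - real m) * p n) sums 0"
    and var: "summable (\<lambda>n. (real n - real m)\<^sup>2 * p n)"
      "A * (real m)\<^sup>2 \<le> (\<Sum>n. (real n - real m)\<^sup>2 * p n)"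
    and quart: "summable (\<lambda>n. (real n - real m) ^ 4 * p n)"
      "(\<Sum>n. (real n - real m) ^ 4 * p n) \<le> B * (real m) ^ 4"
  shows "A / (4 + 4 * B / A) * real m \<le> (\<Sum>n<m. (real m - real n) * p n)"
proof -
  define D where "D = (\<Sum>n<m. (real m - real n) * p n)"
  define \<Lambda> where "\<Lambda> = 2 * B / A + 1"
  have \<Lambda>: "1 \<le> \<Lambda>"
    unfolding \<Lambda>_def using A B by simp
  have H: "0 < \<Lambda> * real m"
    using \<Lambda> m by simp
  have "(\<Sum>n. (real n - real m) ^ 4 * p n) / (\<Lambda> * real m)\<^sup>2 \<le> B * (real m) ^ 4 / (\<Lambda> * real m)\<^sup>2"
    using quart(2) by (rule divide_right_mono) simp
  also have "\<dots> = B / \<Lambda>\<^sup>2 * (real m)\<^sup>2"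
    using m \<Lambda> by (simp add: field_simps power_mult_distrib power4_eq_xxxx power2_eq_square)
  also have "\<dots> \<le> B / \<Lambda> * (real m)\<^sup>2"
    using B \<Lambda> by (intro mult_right_mono divide_left_mono) (auto simp: power2_eq_square)
  also have "\<dots> \<le> A / 2 * (real m)\<^sup>2"
    using A \<Lambda> unfolding \<Lambda>_def by (intro mult_right_mono) (simp_all add: divide_le_eq field_simps)
  finally have "A * (real m)\<^sup>2 \<le> (real m + \<Lambda> * real m) * D + A / 2 * (real m)\<^sup>2"
    using central_second_moment_le[OF p H mean var(1) quart(1)] var(2) unfolding D_def by linarith
  then have "A / 2 * real m * real m \<le> (1 + \<Lambda>) * D * real m"
    by (simp add: power2_eq_square algebra_simps)
  then have "A / 2 * real m \<le> (1 + \<Lambda>) * D"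
    using m by simp
  then have "A * real m \<le> (4 + 4 * B / A) * D"
    unfolding \<Lambda>_def by (simp add: algebra_simps)
  moreover have "0 < 4 + 4 * B / A"
    using A B by (simp add: add_pos_nonneg)
  ultimately show ?thesis
    unfolding D_def by (simp add: pos_divide_le_eq mult.commute)
qed

section \<open>Coefficients of powers of T_a\<close>

lemma fps_inverse_one_plus_const_X:
  "inverse (1 + fps_const c * fps_X) = Abs_fps (\<lambda>n. (- c) ^ n :: 'a::field)"
proof (rule fps_inverse_unique, rule fps_ext)
  show "fps_nth ((1 + fps_const c * fps_X) * Abs_fps (\<lambda>n. (- c) ^ n)) n = fps_nth 1 n" for n
    by (cases n) (simp_all add: distrib_right mult.assoc del: fps_X_mult_nth, simp_all)
qed

lemma moebius_fps_nth_0: "fps_nth (moebius_fps a 1) 0 = a"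
  unfolding moebius_fps_def fps_inverse_one_plus_const_X by simp

lemma moebius_fps_nth_Suc: "fps_nth (moebius_fps a 1) (Suc k) = (- a) ^ k * (1 - a\<^sup>2)"
  unfolding moebius_fps_def fps_inverse_one_plus_const_X
  by (simp add: distrib_right algebra_simps power2_eq_square)

lemma fps_inner_euler_shift_aut:
  assumes a: "\<bar>a\<bar> < 1"
  shows "fps_inner (fps_euler_shift 1 (moebius_fps a 1)) (moebius_fps a 1) = 0"
proof -
  define x where "x = a\<^sup>2"
  have x: "0 \<le> x" "x < 1"
    unfolding x_def using a by (simp_all add: abs_square_less_1)
  have "(\<lambda>k. real (Suc k) * x ^ k - x ^ k) sums (1 / (1 - x)\<^sup>2 - 1 / (1 - x))"
    using geometric_deriv_sums[of x] geometric_sums[of x] x by (intro sums_diff) simp_all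
  then have "(\<lambda>k. (1 - x)\<^sup>2 * (real k * x ^ k)) sums ((1 - x)\<^sup>2 * (1 / (1 - x)\<^sup>2 - 1 / (1 - x)))"
    by (intro sums_mult) (simp add: algebra_simps)
  also have "(1 - x)\<^sup>2 * (1 / (1 - x)\<^sup>2 - 1 / (1 - x)) = x"
    using x unfolding right_diff_distrib by (simp add: power2_eq_square)
  also have "(\<lambda>k. (1 - x)\<^sup>2 * (real k * x ^ k))
      = (\<lambda>k. fps_nth (fps_euler_shift 1 (moebius_fps a 1)) (Suc k)
          * fps_nth (moebius_fps a 1) (Suc k))"
    by (simp add: fps_euler_shift_nth moebius_fps_nth_Suc x_def power_mult_distrib
        power2_eq_square algebra_simps flip: power_mult_distrib)
  finally have "(\<lambda>n. fps_nth (fps_euler_shift 1 (moebius_fps a 1)) n * fps_nth (moebius_fps a 1) n)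
      sums (x + fps_nth (fps_euler_shift 1 (moebius_fps a 1)) 0 * fps_nth (moebius_fps a 1) 0)"
    by (subst sums_Suc_iff[symmetric])
  then show ?thesis
    unfolding fps_inner_def by (simp add: sums_iff fps_euler_shift_nth moebius_fps_nth_0 x_def
        power2_eq_square)
qed

lemma aut_euler_shift_in_fps_X_inv_alg:
  "fps_euler_shift 1 (moebius_fps a 1) \<in> fps_X_inv_alg a"
  using fps_euler_shift_in_fps_X_inv_alg[OF moebius_fps_in_fps_X_inv_alg[of a 1]] by simp

lemma aut_power_first_moment:
  assumes a: "\<bar>a\<bar> < 1" and m: "0 < m"
  shows "(\<lambda>n. (real n - real m) * (fps_nth (moebius_fps a 1 ^ m) n)\<^sup>2) sums 0"
proof -
  let ?T = "moebius_fps a 1" and ?u = "fps_euler_shift 1 (moebius_fps a 1)"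
  obtain j where j: "m = Suc j"
    using m gr0_implies_Suc by blast
  have T: "fps_l2 ?T" and u: "fps_l2 ?u"
    using a fps_l2_fps_X_inv_alg moebius_fps_in_fps_X_inv_alg[of a 1]
      aut_euler_shift_in_fps_X_inv_alg
    by auto
  have shift: "fps_euler_shift m (?T ^ m) = fps_const (real m) * (?T ^ j * ?u)"
    unfolding j by (rule fps_euler_shift_power)
  have Tm: "fps_l2 (?T ^ m)" and Tju: "fps_l2 (?T ^ j * ?u)"
    using fps_l2_moebius_power_mult[of a 1 _ m, OF _ fps_l2_one] fps_l2_moebius_power_mult[OF _ u] a
    by auto
  have "fps_inner (fps_euler_shift m (?T ^ m)) (?T ^ m)
      = real m * fps_inner (?T ^ j * ?u) (?T ^ j * ?T)"
    unfolding shift using Tm Tju by (simp add: fps_inner_const_mult_left j mult.commute)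
  also have "\<dots> = 0"
    using fps_inner_aut_power_mult[OF a u T] fps_inner_euler_shift_aut[OF a] by simp
  finally show ?thesis
    using fps_inner_euler_shift_sums[OF _ Tm] fps_l2_const_mult[OF Tju] shift by metis
qed

lemma aut_power_second_moment:
  assumes a: "\<bar>a\<bar> < 1" and m: "0 < m"
  shows "(\<lambda>n. (real n - real m)\<^sup>2 * (fps_nth (moebius_fps a 1 ^ m) n)\<^sup>2)
      sums ((real m)\<^sup>2 * fps_sqnorm (fps_euler_shift 1 (moebius_fps a 1)))"
proof -
  let ?T = "moebius_fps a 1" and ?u = "fps_euler_shift 1 (moebius_fps a 1)"
  obtain j where j: "m = Suc j"
    using m gr0_implies_Suc by blast
  have u: "fps_l2 ?u"
    using a fps_l2_fps_X_inv_alg aut_euler_shift_in_fps_X_inv_alg by auto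
  have Tju: "fps_l2 (?T ^ j * ?u)"
    using fps_l2_moebius_power_mult[OF _ u] a by simp
  have shift: "fps_euler_shift m (?T ^ m) = fps_const (real m) * (?T ^ j * ?u)"
    unfolding j by (rule fps_euler_shift_power)
  have "fps_sqnorm (fps_euler_shift m (?T ^ m)) = (real m)\<^sup>2 * fps_sqnorm ?u"
    unfolding shift using Tju fps_sqnorm_aut_power_mult[OF a u] by (simp add: fps_sqnorm_const_mult)
  then show ?thesis
    using fps_sqnorm_euler_shift_sums[of m "?T ^ m"] fps_l2_const_mult[OF Tju] shift by metis
qed

lemma aut_power_fourth_moment:
  assumes a: "\<bar>a\<bar> < 1" and m: "2 \<le> m"
  defines "u \<equiv> fps_euler_shift 1 (moebius_fps a 1)"
  shows "summable (\<lambda>n. (real n - real m) ^ 4 * (fps_nth (moebius_fps a 1 ^ m) n)\<^sup>2)"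
    and "(\<Sum>n. (real n - real m) ^ 4 * (fps_nth (moebius_fps a 1 ^ m) n)\<^sup>2)
      \<le> 2 * (fps_sqnorm (u * u) + fps_sqnorm (fps_euler_shift 1 u)) * (real m) ^ 4"
proof -
  let ?T = "moebius_fps a 1"
  obtain i where i: "m = Suc (Suc i)"
    using m by (metis add_2_eq_Suc le_Suc_ex)
  define V where
    "V = fps_const (real (Suc i)) * (?T ^ i * (u * u)) + ?T ^ Suc i * fps_euler_shift 1 u"
  have uu: "fps_l2 (u * u)" and su: "fps_l2 (fps_euler_shift 1 u)"
    using a aut_euler_shift_in_fps_X_inv_alg unfolding u_def
    by (auto intro: fps_l2_fps_X_inv_alg fps_X_inv_alg.mult fps_euler_shift_in_fps_X_inv_alg)
  have V1: "fps_l2 (?T ^ i * (u * u))" and V2: "fps_l2 (?T ^ Suc i * fps_euler_shift 1 u)"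
    using a uu su by (auto intro!: fps_l2_moebius_power_mult simp del: power_Suc)
  have V: "fps_l2 V"
    unfolding V_def using V1 V2 by (intro fps_l2_add fps_l2_const_mult)
  have "fps_sqnorm V \<le> 2 * fps_sqnorm (fps_const (real (Suc i)) * (?T ^ i * (u * u)))
      + 2 * fps_sqnorm (?T ^ Suc i * fps_euler_shift 1 u)"
    unfolding V_def by (rule fps_sqnorm_add_le[OF fps_l2_const_mult[OF V1] V2])
  also have "\<dots> = 2 * ((real (Suc i))\<^sup>2 * fps_sqnorm (u * u))
      + 2 * (1 * fps_sqnorm (fps_euler_shift 1 u))"
    using fps_sqnorm_aut_power_mult[OF a uu] fps_sqnorm_aut_power_mult[OF a su]
    by (simp add: fps_sqnorm_const_mult[OF V1] del: power_Suc)
  also have "\<dots> \<le> 2 * ((real m)\<^sup>2 * fps_sqnorm (u * u))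
      + 2 * ((real m)\<^sup>2 * fps_sqnorm (fps_euler_shift 1 u))"
    using i fps_sqnorm_nonneg[OF uu] fps_sqnorm_nonneg[OF su]
    by (intro add_mono mult_left_mono mult_right_mono) (simp_all add: power_mono one_le_power)
  finally have "(real m)\<^sup>2 * fps_sqnorm V
      \<le> (real m)\<^sup>2 * ((real m)\<^sup>2 * (2 * (fps_sqnorm (u * u) + fps_sqnorm (fps_euler_shift 1 u))))"
    by (intro mult_left_mono) (simp_all add: algebra_simps)
  also have "\<dots> = 2 * (fps_sqnorm (u * u) + fps_sqnorm (fps_euler_shift 1 u)) * (real m) ^ 4"
    by (simp add: power4_eq_xxxx power2_eq_square mult_ac)
  finally have "(real m)\<^sup>2 * fps_sqnorm V
      \<le> 2 * (fps_sqnorm (u * u) + fps_sqnorm (fps_euler_shift 1 u)) * (real m) ^ 4" .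
  moreover have "fps_euler_shift m (fps_euler_shift m (?T ^ m)) = fps_const (real m) * V"
    unfolding i V_def u_def by (rule fps_euler_shift_twice_power)
  then have "(\<lambda>n. (real n - real m) ^ 4 * (fps_nth (?T ^ m) n)\<^sup>2) sums ((real m)\<^sup>2 * fps_sqnorm V)"
    using fps_sqnorm_euler_shift_twice_sums[of m "?T ^ m"] fps_l2_const_mult[OF V]
      fps_sqnorm_const_mult[OF V] by metis
  ultimately show "summable (\<lambda>n. (real n - real m) ^ 4 * (fps_nth (?T ^ m) n)\<^sup>2)"
    and "(\<Sum>n. (real n - real m) ^ 4 * (fps_nth (?T ^ m) n)\<^sup>2)
      \<le> 2 * (fps_sqnorm (u * u) + fps_sqnorm (fps_euler_shift 1 u)) * (real m) ^ 4"
    by (auto simp: sums_iff)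
qed

lemma aut_power_deficit_ge:
  assumes a: "a \<noteq> 0" "\<bar>a\<bar> < 1"
  obtains \<delta> where "0 < \<delta>"
    and "\<And>m. 2 \<le> m \<Longrightarrow> \<delta> * real m \<le> (\<Sum>n<m. (real m - real n) * (fps_nth (moebius_fps a 1 ^ m) n)\<^sup>2)"
proof -
  define u where "u = fps_euler_shift 1 (moebius_fps a 1)"
  define A where "A = a\<^sup>2"
  define B where "B = 2 * (fps_sqnorm (u * u) + fps_sqnorm (fps_euler_shift 1 u))"
  have u: "fps_l2 u" "fps_l2 (u * u)" "fps_l2 (fps_euler_shift 1 u)"
    using a aut_euler_shift_in_fps_X_inv_alg unfolding u_def
    by (auto intro: fps_l2_fps_X_inv_alg fps_X_inv_alg.mult fps_euler_shift_in_fps_X_inv_alg)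
  have A: "0 < A"
    unfolding A_def using a by simp
  have B: "0 \<le> B"
    unfolding B_def using u by (simp add: fps_sqnorm_nonneg)
  have "(fps_nth u 0)\<^sup>2 \<le> fps_sqnorm u"
    using fps_sum_sq_le_sqnorm[OF u(1), of "{0}"] by simp
  then have A_le: "A \<le> fps_sqnorm u"
    unfolding u_def A_def by (simp add: fps_euler_shift_nth moebius_fps_nth_0)
  show ?thesis
  proof
    show "0 < A / (4 + 4 * B / A)"
      using A B by (simp add: add_pos_nonneg)
    fix m :: nat
    assume m: "2 \<le> m"
    have second: "(\<lambda>n. (real n - real m)\<^sup>2 * (fps_nth (moebius_fps a 1 ^ m) n)\<^sup>2)
        sums ((real m)\<^sup>2 * fps_sqnorm u)"
      unfolding u_def using a m by (intro aut_power_second_moment) auto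
    have "A * (real m)\<^sup>2 \<le> (real m)\<^sup>2 * fps_sqnorm u"
      using A_le by (simp add: mult.commute mult_right_mono)
    with second show "A / (4 + 4 * B / A) * real m
        \<le> (\<Sum>n<m. (real m - real n) * (fps_nth (moebius_fps a 1 ^ m) n)\<^sup>2)"
      using A B m a aut_power_first_moment[of a m] aut_power_fourth_moment[of a m]
      unfolding B_def u_def
      by (intro deficit_below_mean_ge) (auto simp: sums_iff)
  qed
qed

text \<open>Dilating by \<open>r\<close> damps the first \<open>L\<close> coefficients of \<open>T\<^sub>a\<^sup>m\<close> by at most
  \<open>r\<^sup>L\<close>, but turns \<open>T\<^sub>a\<close> into a strict contraction.\<close>

lemma aut_power_low_mass_le:
  assumes a: "0 \<le> a" "a < 1" and r: "0 \<le> r" "r \<le> 1"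
  shows "r ^ (2 * L) * (\<Sum>n\<le>L. (fps_nth (moebius_fps a 1 ^ m) n)\<^sup>2)
      \<le> (1 - (1 - a) / (1 + a) * (1 - r)) ^ m"
proof -
  let ?c = "moebius_fps a 1 ^ m"
  have dilated: "?c oo (fps_const r * fps_X) = moebius_fps a r ^ m"
    by (simp add: moebius_fps_compose_dilation flip: fps_compose_power)
  have l2: "fps_l2 (moebius_fps a r ^ m)"
    using fps_l2_moebius_power_mult[OF _ fps_l2_one, of a r m] a r
    by (simp add: abs_mult mult_le_one le_less_trans[OF mult_left_le])
  have "r ^ (2 * L) * (\<Sum>n\<le>L. (fps_nth ?c n)\<^sup>2) = (\<Sum>n\<le>L. r ^ (2 * L) * (fps_nth ?c n)\<^sup>2)"
    by (simp add: sum_distrib_left)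
  also have "\<dots> \<le> (\<Sum>n\<le>L. (fps_nth (moebius_fps a r ^ m) n)\<^sup>2)"
  proof (rule sum_mono)
    fix n
    assume "n \<in> {..L}"
    then have "r ^ (2 * L) \<le> r ^ (2 * n)"
      using r by (intro power_decreasing) auto
    then show "r ^ (2 * L) * (fps_nth ?c n)\<^sup>2 \<le> (fps_nth (moebius_fps a r ^ m) n)\<^sup>2"
      using mult_right_mono[of "r ^ (2 * L)" "r ^ (2 * n)" "(fps_nth ?c n)\<^sup>2"]
      unfolding dilated[symmetric]
      by (simp add: power_mult_distrib power_mult mult.commute[of 2])
  qed
  also have "\<dots> \<le> fps_sqnorm (moebius_fps a r ^ m)"
    using l2 by (rule fps_sum_sq_le_sqnorm) simp
  also have "\<dots> \<le> (1 - (1 - a) / (1 + a) * (1 - r)) ^ m"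
    using fps_sqnorm_moebius_power_mult_le[OF fps_l2_one a r, of m] by (simp add: fps_sqnorm_one)
  finally show ?thesis .
qed

lemma exp_neg_two_mult_le_one_minus:
  fixes x :: real
  assumes "0 \<le> x" "x \<le> 1 / 2"
  shows "exp (- 2 * x) \<le> 1 - x"
proof -
  have "2 * x\<^sup>2 \<le> x"
    using assms mult_left_mono[of "2 * x" 1 x] by (simp add: power2_eq_square)
  then have "- 2 * x \<le> ln (1 - x)"
    using ln_one_minus_pos_lower_bound[OF assms] by linarith
  then have "exp (- 2 * x) \<le> exp (ln (1 - x))"
    by simp
  also have "\<dots> = 1 - x"
    using assms by simp
  finally show ?thesis .
qed

lemma aut_power_low_mass_le_exp:
  assumes a: "0 \<le> a" "a < 1" and x: "0 \<le> x" "x \<le> 1 / 2"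
  shows "(\<Sum>n\<le>L. (fps_nth (moebius_fps a 1 ^ m) n)\<^sup>2)
      \<le> exp (4 * x * real L - (1 - a) / (1 + a) * x * real m)"
proof -
  define \<kappa> where "\<kappa> = (1 - a) / (1 + a)"
  define S where "S = (\<Sum>n\<le>L. (fps_nth (moebius_fps a 1 ^ m) n)\<^sup>2)"
  have r: "0 \<le> 1 - x" "1 - x \<le> 1"
    using x by auto
  have "\<kappa> * x \<le> 1"
    unfolding \<kappa>_def using a x by (intro mult_le_one) auto
  have "exp (- (4 * x * real L)) = exp (- 2 * x) ^ (2 * L)"
    by (simp flip: exp_of_nat_mult)
  also have "\<dots> \<le> (1 - x) ^ (2 * L)"
    using exp_neg_two_mult_le_one_minus[OF x] by (intro power_mono) auto
  finally have "exp (- (4 * x * real L)) * S \<le> (1 - x) ^ (2 * L) * S"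
    unfolding S_def by (rule mult_right_mono) (simp add: sum_nonneg)
  also have "\<dots> \<le> (1 - \<kappa> * x) ^ m"
    using aut_power_low_mass_le[OF a r, of L m] unfolding S_def \<kappa>_def by simp
  also have "\<dots> \<le> exp (- (\<kappa> * x)) ^ m"
    using \<open>\<kappa> * x \<le> 1\<close> exp_ge_add_one_self[of "- (\<kappa> * x)"] by (intro power_mono) auto
  also have "\<dots> = exp (- (\<kappa> * x * real m))"
    by (simp flip: exp_of_nat_mult)
  finally have "S \<le> exp (- (\<kappa> * x * real m)) / exp (- (4 * x * real L))"
    by (simp add: le_divide_eq mult.commute)
  also have "\<dots> = exp (4 * x * real L - \<kappa> * x * real m)"
    unfolding exp_diff[symmetric] by (simp add: algebra_simps)
  finally show ?thesis
    unfolding S_def \<kappa>_def .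
qed

lemma aut_power_initial_mass_small:
  assumes a: "0 \<le> a" "a < 1" and \<eta>: "0 < \<eta>"
  obtains \<epsilon> M where "0 < \<epsilon>" "\<epsilon> < 1"
    and "\<And>m L. M \<le> m \<Longrightarrow> real L \<le> \<epsilon> * real m \<Longrightarrow>
      (\<Sum>n\<le>L. (fps_nth (moebius_fps a 1 ^ m) n)\<^sup>2) \<le> \<eta>"
proof
  define \<kappa> where "\<kappa> = (1 - a) / (1 + a)"
  define s where "s = 2 * \<bar>ln \<eta>\<bar> / \<kappa> + 1"
  have \<kappa>: "0 < \<kappa>" "\<kappa> \<le> 1"
    unfolding \<kappa>_def using a by auto
  have s: "1 \<le> s"
    unfolding s_def using \<kappa> by simp
  have "\<kappa> * s / 2 = \<bar>ln \<eta>\<bar> + \<kappa> / 2"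
    unfolding s_def using \<kappa> by (simp add: field_simps)
  then have s_ln: "- (\<kappa> * s / 2) \<le> ln \<eta>"
    using \<kappa> by linarith
  show "0 < \<kappa> / 8" "\<kappa> / 8 < 1"
    using \<kappa> by auto
  fix m L
  assume m: "nat \<lceil>2 * s\<rceil> \<le> m" and L: "real L \<le> \<kappa> / 8 * real m"
  have m_pos: "0 < real m" and x: "0 \<le> s / real m" "s / real m \<le> 1 / 2"
    using m s by (auto simp: field_simps)
  have "4 * (s / real m) * real L \<le> 4 * (s / real m) * (\<kappa> / 8 * real m)"
    using L x by (intro mult_left_mono) auto
  moreover have "4 * (s / real m) * (\<kappa> / 8 * real m) = \<kappa> * s / 2"
    and "\<kappa> * (s / real m) * real m = \<kappa> * s"
    using m_pos by simp_all
  ultimately have "exp (4 * (s / real m) * real L - \<kappa> * (s / real m) * real m) \<le> exp (ln \<eta>)"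
    using s_ln by simp
  then have "exp (4 * (s / real m) * real L - \<kappa> * (s / real m) * real m) \<le> \<eta>"
    by (simp only: exp_ln[OF \<eta>])
  then show "(\<Sum>n\<le>L. (fps_nth (moebius_fps a 1 ^ m) n)\<^sup>2) \<le> \<eta>"
    using aut_power_low_mass_le_exp[OF a x, where L = L and m = m] unfolding \<kappa>_def by linarith
qed

lemma aut_power_middle_mass_ge:
  assumes a: "0 < a" "a < 1"
  obtains c \<epsilon> M where "0 < c" "0 < \<epsilon>"
    and "\<And>m L. M \<le> m \<Longrightarrow> real L \<le> \<epsilon> * real m \<Longrightarrow>
      c \<le> (\<Sum>n\<in>{L<..<m}. (fps_nth (moebius_fps a 1 ^ m) n)\<^sup>2)"
proof -
  obtain \<delta> where \<delta>: "0 < \<delta>"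
    and deficit: "\<And>m. 2 \<le> m \<Longrightarrow>
      \<delta> * real m \<le> (\<Sum>n<m. (real m - real n) * (fps_nth (moebius_fps a 1 ^ m) n)\<^sup>2)"
    using aut_power_deficit_ge[of a] a by auto
  obtain \<epsilon> M where \<epsilon>: "0 < \<epsilon>" "\<epsilon> < 1"
    and initial: "\<And>m L. M \<le> m \<Longrightarrow> real L \<le> \<epsilon> * real m \<Longrightarrow>
      (\<Sum>n\<le>L. (fps_nth (moebius_fps a 1 ^ m) n)\<^sup>2) \<le> \<delta> / 2"
    using aut_power_initial_mass_small[of a "\<delta> / 2"] a \<delta> by auto
  show ?thesis
  proof
    show "0 < \<delta> / 2" "0 < \<epsilon>"
      using \<delta> \<epsilon> by auto
    fix m L
    assume m: "max M 2 \<le> m" and L: "real L \<le> \<epsilon> * real m"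
    define p where "p n = (fps_nth (moebius_fps a 1 ^ m) n)\<^sup>2" for n
    have m_pos: "0 < real m"
      using m by simp
    have "\<epsilon> * real m < 1 * real m"
      using \<epsilon> m_pos by (intro mult_strict_right_mono) auto
    then have "real L < real m"
      using L by linarith
    then have split: "{..<m} = {..L} \<union> {L<..<m}"
      by auto
    have "real m * \<delta> \<le> (\<Sum>n<m. (real m - real n) * p n)"
      using deficit[of m] m unfolding p_def by (simp add: mult.commute)
    also have "\<dots> \<le> (\<Sum>n<m. real m * p n)"
      by (intro sum_mono mult_right_mono) (auto simp: p_def)
    also have "\<dots> = real m * ((\<Sum>n\<le>L. p n) + (\<Sum>n\<in>{L<..<m}. p n))"
      unfolding split sum_distrib_left[symmetric] by (subst sum.union_disjoint) auto
    finally have "\<delta> \<le> (\<Sum>n\<le>L. p n) + (\<Sum>n\<in>{L<..<m}. p n)"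
      using m_pos by simp
    moreover have "(\<Sum>n\<le>L. p n) \<le> \<delta> / 2"
      using initial[OF _ L] m unfolding p_def by simp
    ultimately show "\<delta> / 2 \<le> (\<Sum>n\<in>{L<..<m}. (fps_nth (moebius_fps a 1 ^ m) n)\<^sup>2)"
      unfolding p_def by simp
  qed
qed

section \<open>Composition with T_a on H^2(beta0)\<close>

definition fps_of_real :: "real fps \<Rightarrow> complex fps" where
  "fps_of_real F = Abs_fps (\<lambda>n. complex_of_real (fps_nth F n))"

lemma fps_of_real_nth [simp]: "fps_nth (fps_of_real F) n = complex_of_real (fps_nth F n)"
  unfolding fps_of_real_def by simp

lemma fps_of_real_add: "fps_of_real (F + G) = fps_of_real F + fps_of_real G"
  by (rule fps_ext) simp

lemma fps_of_real_mult: "fps_of_real (F * G) = fps_of_real F * fps_of_real G"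
  by (rule fps_ext) (simp add: fps_mult_nth)

lemma fps_of_real_const: "fps_of_real (fps_const c) = fps_const (complex_of_real c)"
  by (rule fps_ext) simp

lemma fps_of_real_one: "fps_of_real 1 = 1"
  by (rule fps_ext) simp

lemma fps_of_real_X: "fps_of_real fps_X = fps_X"
  by (rule fps_ext) (simp add: fps_X_nth)

lemma fps_of_real_power: "fps_of_real (F ^ m) = fps_of_real F ^ m"
  by (induction m) (simp_all add: fps_of_real_one fps_of_real_mult)

lemma fps_of_real_inverse:
  assumes "fps_nth F 0 \<noteq> 0"
  shows "fps_of_real (inverse F) = inverse (fps_of_real F)"
proof -
  have "fps_of_real F * fps_of_real (inverse F) = 1"
    using assms by (simp add: fps_of_real_one inverse_mult_eq_1' flip: fps_of_real_mult)
  then show ?thesis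
    by (rule fps_inverse_unique[symmetric])
qed

lemma T_power_has_fps_expansion:
  "(\<lambda>z. T (complex_of_real a) z ^ m) has_fps_expansion fps_of_real (moebius_fps a 1 ^ m)"
proof -
  have "(\<lambda>z. (complex_of_real a + z) * inverse (1 + complex_of_real a * z)) has_fps_expansion
      (fps_const (complex_of_real a) + fps_X) * inverse (1 + fps_const (complex_of_real a) * fps_X)"
    by (intro fps_expansion_intros) simp
  then show ?thesis
    unfolding T_def moebius_fps_def
    by (simp add: divide_inverse fps_of_real_power fps_of_real_mult fps_of_real_add
        fps_of_real_const
        fps_of_real_X fps_of_real_inverse fps_of_real_one has_fps_expansion_power)
qed

lemma taylor_coeff_power_comp_T:
  "taylor_coeff ((\<lambda>z. z ^ m) \<circ> T (complex_of_real a)) n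
     = complex_of_real (fps_nth (moebius_fps a 1 ^ m) n)"
  using fps_nth_fps_expansion[OF T_power_has_fps_expansion, of a m n]
  unfolding taylor_coeff_def by (simp add: o_def)

lemma taylor_coeff_power: "taylor_coeff (\<lambda>z. z ^ m) n = (if n = m then 1 else 0)"
  using fps_nth_fps_expansion[OF has_fps_expansion_fps_X_power, of m n]
  unfolding taylor_coeff_def by simp

lemma H2_terms_power:
  "(\<lambda>n. (cmod (taylor_coeff (\<lambda>z. z ^ m) n))\<^sup>2 * \<beta> n) = (\<lambda>n. if n = m then \<beta> m else 0)"
  by (auto simp: taylor_coeff_power)

lemma in_H2_power: "in_H2 \<beta> (\<lambda>z. z ^ m)"
  unfolding in_H2_def H2_terms_power by (auto intro: holomorphic_intros summable_single)

lemma H2_norm_power: "H2_norm \<beta> (\<lambda>z. z ^ m) = sqrt (\<beta> m)"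
  unfolding H2_norm_def H2_terms_power using sums_single[of m "\<lambda>_. \<beta> m"] by (simp add: sums_iff)

lemma H2_norm_nonneg: "in_H2 \<beta> f \<Longrightarrow> (\<And>n. 0 \<le> \<beta> n) \<Longrightarrow> 0 \<le> H2_norm \<beta> f"
  unfolding in_H2_def H2_norm_def by (simp add: suminf_nonneg)

lemma sum_le_H2_norm_sq:
  assumes "in_H2 \<beta> f" "\<And>n. 0 \<le> \<beta> n" "finite A"
  shows "(\<Sum>n\<in>A. (cmod (taylor_coeff f n))\<^sup>2 * \<beta> n) \<le> (H2_norm \<beta> f)\<^sup>2"
  using assms sum_le_suminf[of "\<lambda>n. (cmod (taylor_coeff f n))\<^sup>2 * \<beta> n" A]
  unfolding in_H2_def H2_norm_def by (simp add: suminf_nonneg)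

lemma beta0_pos: "0 < beta0 n"
  unfolding beta0_def by (simp add: Let_def)

lemma beta0_block:
  assumes k: "3 \<le> k" and n: "fact k < n" "n \<le> (fact (Suc k) :: nat)"
  shows "beta0 n = (if n = fact (Suc k) - 1 then 1 / fact (Suc k) else 1 / fact k)"
proof -
  have "(fact 3 :: nat) \<le> fact k"
    using k by (rule fact_mono)
  then have n6: "\<not> n \<le> 6"
    using n by (simp add: eval_nat_numeral)
  have the_k: "(THE k'. 3 \<le> k' \<and> fact k' < n \<and> n \<le> (fact (Suc k') :: nat)) = k"
  proof (rule the_equality)
    show "3 \<le> k \<and> fact k < n \<and> n \<le> (fact (Suc k) :: nat)"
      using k n by simp
    fix k'
    assume k': "3 \<le> k' \<and> fact k' < n \<and> n \<le> (fact (Suc k') :: nat)"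
    show "k' = k"
    proof (rule ccontr)
      assume "k' \<noteq> k"
      then have "Suc k' \<le> k \<or> Suc k \<le> k'"
        by linarith
      then show False
        using fact_mono[of "Suc k'" k, where 'a = nat] fact_mono[of "Suc k" k', where 'a = nat] k' n
        by auto
    qed
  qed
  show ?thesis
    unfolding beta0_def Let_def the_k using n6 by simp
qed

lemma fact_Suc_minus_one_ge: "k * fact k \<le> (fact (Suc k) :: nat) - 1"
proof -
  have "(fact (Suc k) :: nat) = fact k + k * fact k"
    by simp
  then show ?thesis
    using fact_ge_1[of k, where 'a = nat] by linarith
qed

lemma beta0_fact_Suc_minus_one:
  assumes "3 \<le> k"
  shows "beta0 (fact (Suc k) - 1) = 1 / fact (Suc k)"
proof -
  have "3 * fact k \<le> (fact (Suc k) :: nat) - 1"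
    using fact_Suc_minus_one_ge[of k] mult_le_mono1[OF assms, of "fact k"] by linarith
  then have "fact k < (fact (Suc k) :: nat) - 1"
    using fact_ge_1[of k, where 'a = nat] by linarith
  then show ?thesis
    using beta0_block[OF assms] by simp
qed

lemma beta0_between_facts:
  assumes "3 \<le> k" "fact k < n" "n < (fact (Suc k) :: nat) - 1"
  shows "beta0 n = 1 / fact k"
  using beta0_block[OF assms(1,2)] assms(3) by simp

lemma H2_norm_comp_T_power_ge:
  assumes a: "0 < a" "a < 1"
  obtains c K where "0 < c"
    and "\<And>k. K \<le> k \<Longrightarrow> in_H2 beta0 ((\<lambda>z. z ^ (fact (Suc k) - 1)) \<circ> T (complex_of_real a)) \<Longrightarrow>
      c / fact k \<le> (H2_norm beta0 ((\<lambda>z. z ^ (fact (Suc k) - 1)) \<circ> T (complex_of_real a)))\<^sup>2"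
proof -
  obtain c \<epsilon> M where c: "0 < c" and \<epsilon>: "0 < \<epsilon>"
    and middle: "\<And>m L. M \<le> m \<Longrightarrow> real L \<le> \<epsilon> * real m \<Longrightarrow>
      c \<le> (\<Sum>n\<in>{L<..<m}. (fps_nth (moebius_fps a 1 ^ m) n)\<^sup>2)"
    using aut_power_middle_mass_ge[OF a] by blast
  show ?thesis
  proof (rule that[OF c])
    fix k
    assume k: "max (max 3 M) (nat \<lceil>1 / \<epsilon>\<rceil>) \<le> k"
    define m where "m = (fact (Suc k) :: nat) - 1"
    define L where "L = (fact k :: nat)"
    let ?f = "(\<lambda>z. z ^ m) \<circ> T (complex_of_real a)"
    assume "in_H2 beta0 ((\<lambda>z. z ^ (fact (Suc k) - 1)) \<circ> T (complex_of_real a))"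
    then have f: "in_H2 beta0 ?f"
      unfolding m_def .
    have km: "k * L \<le> m"
      unfolding m_def L_def by (rule fact_Suc_minus_one_ge)
    have "k \<le> k * L"
      using mult_le_mono2[of 1 L k] fact_ge_1[of k, where 'a = nat] unfolding L_def by simp
    then have "M \<le> k * L"
      using k by linarith
    have "1 \<le> \<epsilon> * real k"
      using k \<epsilon> by (simp add: field_simps)
    then have "real L \<le> \<epsilon> * real k * real L"
      using mult_right_mono[of 1 "\<epsilon> * real k" "real L"] by simp
    also have "\<dots> \<le> \<epsilon> * real m"
      using km \<epsilon> by (simp flip: of_nat_mult of_nat_le_iff)
    finally have "c \<le> (\<Sum>n\<in>{L<..<m}. (fps_nth (moebius_fps a 1 ^ m) n)\<^sup>2)"
      using middle \<open>M \<le> k * L\<close> km by auto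
    then have "c / fact k \<le> (\<Sum>n\<in>{L<..<m}. (fps_nth (moebius_fps a 1 ^ m) n)\<^sup>2) / fact k"
      by (rule divide_right_mono) simp
    also have "\<dots> = (\<Sum>n\<in>{L<..<m}. (cmod (taylor_coeff ?f n))\<^sup>2 * beta0 n)"
      using beta0_between_facts[of k] k unfolding taylor_coeff_power_comp_T m_def L_def
      by (simp add: sum_divide_distrib)
    also have "\<dots> \<le> (H2_norm beta0 ?f)\<^sup>2"
      using f by (rule sum_le_H2_norm_sq) (auto intro: less_imp_le beta0_pos)
    finally show "c / fact k
        \<le> (H2_norm beta0 ((\<lambda>z. z ^ (fact (Suc k) - 1)) \<circ> T (complex_of_real a)))\<^sup>2"
      unfolding m_def .
  qed
qed

theorem mainTheorem14:
  fixes a :: real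
  assumes "0 < a" and "a < 1"
  shows "\<not> bounded_comp_op beta0 (T (complex_of_real a))"
proof
  assume "bounded_comp_op beta0 (T (complex_of_real a))"
  then obtain C where C: "\<And>f. in_H2 beta0 f \<Longrightarrow> in_H2 beta0 (f \<circ> T (complex_of_real a)) \<and>
      H2_norm beta0 (f \<circ> T (complex_of_real a)) \<le> C * H2_norm beta0 f"
    unfolding bounded_comp_op_def by blast
  obtain c K where c: "0 < c" and lower: "\<And>k. K \<le> k \<Longrightarrow>
      in_H2 beta0 ((\<lambda>z. z ^ (fact (Suc k) - 1)) \<circ> T (complex_of_real a)) \<Longrightarrow>
      c / fact k \<le> (H2_norm beta0 ((\<lambda>z. z ^ (fact (Suc k) - 1)) \<circ> T (complex_of_real a)))\<^sup>2"
    using H2_norm_comp_T_power_ge assms by blast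
  define k where "k = 3 + K + nat \<lceil>C\<^sup>2 / c\<rceil>"
  have k: "3 \<le> k" "K \<le> k" "C\<^sup>2 / c \<le> real k"
    unfolding k_def using real_nat_ceiling_ge[of "C\<^sup>2 / c"] by auto
  let ?f = "\<lambda>z::complex. z ^ (fact (Suc k) - 1)"
  have "c / fact k \<le> (H2_norm beta0 (?f \<circ> T (complex_of_real a)))\<^sup>2"
    using lower[OF k(2)] C[OF in_H2_power] by blast
  also have "\<dots> \<le> (C * H2_norm beta0 ?f)\<^sup>2"
    using C[OF in_H2_power] beta0_pos by (intro power_mono H2_norm_nonneg) (auto intro: less_imp_le)
  also have "\<dots> = C\<^sup>2 / ((real k + 1) * fact k)"
    by (simp only: H2_norm_power beta0_fact_Suc_minus_one[OF k(1)]) (simp add: power_mult_distrib)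
  finally have "c / fact k * ((real k + 1) * fact k)
      \<le> C\<^sup>2 / ((real k + 1) * fact k) * ((real k + 1) * fact k)"
    by (rule mult_right_mono) simp
  then have "c * (real k + 1) \<le> C\<^sup>2"
    by simp
  with k(3) c show False
    by (simp add: field_simps)
qed

end
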